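(* Let $F>1$ and $s>0$ be constants. Consider the self-adjusting $(1,\lambda)$ EA (defined in the context) with update strength $F$ and success rate $s$, using either standard bit mutation with mutation probability $p\in O(1/n)\cap n^{-O(1)}$ or the heavy-tailed mutation operator with a constant $\beta>1$, on an everywhere hard function $f$ with constant $\varepsilon$ and $d+1=n^{o(\log n)}$ function values. Let $\gamma>1$ be a constant such that $p_x^-\le\gamma^{-1}$ for all non-optimal $x$, and define \[\lambda_1:=4\max\left(\log_\gamma(2d(s+1)),\,\log_\gamma(n\log n)\right),\qquad \lambda_2:=n^{\varepsilon/2}.\] Consider the algorithm at some time $t^*$ with $\lambda_{t^*}\ge\lambda_2$. Then the probability that within the next $n^{o(\log n)}$ generations the offspring population size drops below $\lambda_1$ is at most $n^{-\Omega(\log n)}$.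
   Context: Search space $\{0,1\}^n$; asymptotics with respect to $n\to\infty$. W.l.o.g. $f$ takes values in $\{0,\dots,d\}$ with global optima at value $d$. Self-adjusting $(1,\lambda)$ EA: maintains a search point $x$ and real-valued $\lambda$ (rounded to a nearest integer when needed); $\lambda_t$ is the value in generation $t$. Each generation creates $\lambda$ offspring independently by mutating $x$, picks an offspring $y$ of maximum fitness (ties uniformly at random), sets $x\leftarrow y$ in any case, and sets $\lambda\leftarrow\max\{1,\lambda/F\}$ if $f(y)>f(x)$ and $\lambda\leftarrow F^{1/s}\lambda$ otherwise. Standard bit mutation with probability $p$ flips each bit independently with probability $p$. Heavy-tailed mutation with $\beta>1$ draws $\chi\in\{1,\dots,n/2\}$ with $\Pr[\chi=i]=i^{-\beta}/\sum_{j=1}^{n/2}j^{-\beta}$ and then does standard bit mutation with probability $\chi/n$. For these operators such a constant $\gamma>1$ exists. $p_x^+$ (resp. $p_x^-$) is the probability that a single offspring of $x$ has strictly larger (resp. smaller) fitness than $x$; $p_{\max}:=\max\{p_x^+ : f(x)<d\}$. $f$ is everywhere hard with constant $\varepsilon\in(0,1)$ if $p_{\max}=O(n^{-\varepsilon})$. *)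

theory Defs
  imports "HOL-Probability.Probability" "HOL-Library.Landau_Symbols"
begin

type_synonym bitstr = "nat \<Rightarrow> bool"
type_synonym ea_state = "bitstr \<times> real"

text \<open>Search space {0,1}^n: bit strings x with x i = False for i >= n.\<close>
definition space :: "nat \<Rightarrow> bitstr set" where
  "space n = {x. \<forall>i\<ge>n. \<not> x i}"

definition sbm :: "nat \<Rightarrow> real \<Rightarrow> bitstr \<Rightarrow> bitstr pmf" where
  "sbm n p x = map_pmf (\<lambda>b i. x i \<noteq> b i) (Pi_pmf {..<n} False (\<lambda>_. bernoulli_pmf p))"

definition power_law :: "nat \<Rightarrow> real \<Rightarrow> nat pmf" where
  "power_law n \<beta> = embed_pmf (\<lambda>i. if 1 \<le> i \<and> i \<le> n div 2
      then real i powr (-\<beta>) / (\<Sum>j=1..n div 2. real j powr (-\<beta>)) else 0)"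

definition heavy_tailed :: "nat \<Rightarrow> real \<Rightarrow> bitstr \<Rightarrow> bitstr pmf" where
  "heavy_tailed n \<beta> x = bind_pmf (power_law n \<beta>) (\<lambda>chi. sbm n (real chi / real n) x)"

definition p_plus :: "(bitstr \<Rightarrow> nat) \<Rightarrow> (bitstr \<Rightarrow> bitstr pmf) \<Rightarrow> bitstr \<Rightarrow> real" where
  "p_plus f mut x = measure_pmf.prob (mut x) {y. f y > f x}"

definition p_minus :: "(bitstr \<Rightarrow> nat) \<Rightarrow> (bitstr \<Rightarrow> bitstr pmf) \<Rightarrow> bitstr \<Rightarrow> real" where
  "p_minus f mut x = measure_pmf.prob (mut x) {y. f y < f x}"

definition p_max :: "(nat \<Rightarrow> bitstr \<Rightarrow> nat) \<Rightarrow> (nat \<Rightarrow> nat) \<Rightarrow> (nat \<Rightarrow> bitstr \<Rightarrow> bitstr pmf) \<Rightarrow> nat \<Rightarrow> real" where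
  "p_max f d mut n = (let S = {x \<in> space n. f n x < d n} in
     if S = {} then 0 else Max (p_plus (f n) (mut n) ` S))"

definition everywhere_hard :: "(nat \<Rightarrow> bitstr \<Rightarrow> nat) \<Rightarrow> (nat \<Rightarrow> nat) \<Rightarrow> (nat \<Rightarrow> bitstr \<Rightarrow> bitstr pmf) \<Rightarrow> real \<Rightarrow> bool" where
  "everywhere_hard f d mut \<epsilon> \<longleftrightarrow> 0 < \<epsilon> \<and> \<epsilon> < 1 \<and>
     p_max f d mut \<in> O(\<lambda>n. real n powr (-\<epsilon>))"

definition best_offspring :: "(bitstr \<Rightarrow> nat) \<Rightarrow> (bitstr \<Rightarrow> bitstr pmf) \<Rightarrow> nat \<Rightarrow> bitstr \<Rightarrow> bitstr pmf" where
  "best_offspring f mut k x =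
     bind_pmf (Pi_pmf {..<k} x (\<lambda>_. mut x)) (\<lambda>ys.
       let m = Max ((\<lambda>i. f (ys i)) ` {..<k}) in
       map_pmf ys (pmf_of_set {i. i < k \<and> f (ys i) = m}))"

definition ea_step :: "real \<Rightarrow> real \<Rightarrow> (bitstr \<Rightarrow> nat) \<Rightarrow> (bitstr \<Rightarrow> bitstr pmf) \<Rightarrow> ea_state \<Rightarrow> ea_state pmf" where
  "ea_step F s f mut st = (case st of (x, lam) \<Rightarrow>
     map_pmf (\<lambda>y. (y, if f y > f x then max 1 (lam / F) else F powr (1 / s) * lam))
       (best_offspring f mut (nat (round lam)) x))"

primrec traj :: "('a \<Rightarrow> 'a pmf) \<Rightarrow> nat \<Rightarrow> 'a \<Rightarrow> 'a list pmf" where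
  "traj step 0 st = return_pmf [st]"
| "traj step (Suc t) st = bind_pmf (step st) (\<lambda>st'. map_pmf (Cons st) (traj step t st'))"

definition lambda1 :: "real \<Rightarrow> real \<Rightarrow> nat \<Rightarrow> nat \<Rightarrow> real" where
  "lambda1 \<gamma> s dn n = 4 * max (log \<gamma> (2 * real dn * (s + 1))) (log \<gamma> (real n * ln (real n)))"

definition lambda2 :: "real \<Rightarrow> nat \<Rightarrow> real" where
  "lambda2 \<epsilon> n = real n powr (\<epsilon> / 2)"

end

theory Submission
  imports Defs "HOL-Real_Asymp.Real_Asymp"
begin

(* Track lambda through the potential (lambda1 / min lambda lambda2) powr kappa with
   kappa = (epsilon/4) log_F n, so that F powr kappa = n powr (epsilon/4). For lambda <= lambda2 a
   generation succeeds with probability at most 2 lambda2 p_max = O(n powr (-epsilon/2)), and only a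
   success (which divides lambda by F) can raise the potential, by the factor F powr kappa; a failure
   multiplies lambda by F powr (1/s) and the potential by n powr (-epsilon/(4 s)). Hence the expected
   potential grows by at most (F lambda1 / lambda2) powr kappa = n powr (-Omega(log n)) per generation,
   the error coming from the cap at lambda2. Since the potential is at least 1 once lambda < lambda1,
   Markov's inequality summed over n powr o(log n) generations gives the claim. *)

lemma finite_space: "finite (space n)"
proof -
  have "inj_on (\<lambda>x. {i. x i}) (space n)"
    by (auto simp: inj_on_def fun_eq_iff)
  moreover have "(\<lambda>x. {i. x i}) ` space n \<subseteq> Pow {..<n}"
    by (auto simp: space_def not_le[symmetric])
  ultimately show ?thesis
    by (meson finite_Pow_iff finite_lessThan finite_subset inj_on_finite)
qed

lemma set_pmf_sbm_subset_space: "x \<in> space n \<Longrightarrow> set_pmf (sbm n p x) \<subseteq> space n"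
  unfolding sbm_def using set_Pi_pmf_subset[of "{..<n}" False "\<lambda>_. bernoulli_pmf p"]
  by (auto simp: space_def)

lemma set_pmf_heavy_tailed_subset_space:
  "x \<in> space n \<Longrightarrow> set_pmf (heavy_tailed n \<beta> x) \<subseteq> space n"
  unfolding heavy_tailed_def using set_pmf_sbm_subset_space by auto

lemma p_max_nonneg: "0 \<le> p_max f d mut n"
proof -
  let ?S = "{x \<in> space n. f n x < d n}"
  have "finite ?S" using finite_space[of n] by simp
  then have "0 \<le> Max (p_plus (f n) (mut n) ` ?S)" if "?S \<noteq> {}"
    using that by (auto simp: Max_ge_iff p_plus_def)
  then show ?thesis by (auto simp: p_max_def Let_def)
qed

lemma p_plus_le_p_max:
  assumes x: "x \<in> space n" and supp: "set_pmf (mut n x) \<subseteq> space n"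
    and f_range: "\<And>y. y \<in> space n \<Longrightarrow> f n y \<le> d n"
  shows "p_plus (f n) (mut n) x \<le> p_max f d mut n"
proof (cases "f n x < d n")
  case True
  let ?S = "{x \<in> space n. f n x < d n}"
  have "x \<in> ?S" using x True by simp
  moreover have "finite ?S" using finite_space[of n] by simp
  ultimately show ?thesis by (auto simp: p_max_def Let_def intro: Max_ge)
next
  case False
  have "{y. f n y > f n x} \<inter> set_pmf (mut n x) = {}"
    using supp f_range False by fastforce
  then have "p_plus (f n) (mut n) x = 0"
    unfolding p_plus_def by (simp add: measure_pmf_zero_iff Int_commute)
  then show ?thesis using p_max_nonneg by simp
qed

lemma argmax_indices_nonempty:
  fixes g :: "nat \<Rightarrow> nat"
  assumes "1 \<le> k"
  shows "{i. i < k \<and> g i = Max (g ` {..<k})} \<noteq> {}"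
proof -
  have "Max (g ` {..<k}) \<in> g ` {..<k}"
    using assms by (intro Max_in) (auto simp: lessThan_empty_iff)
  then show ?thesis by auto
qed

lemma set_pmf_best_offspring_subset:
  assumes "1 \<le> k"
  shows "set_pmf (best_offspring f mut k x) \<subseteq> set_pmf (mut x)"
proof
  fix y assume "y \<in> set_pmf (best_offspring f mut k x)"
  then obtain ys i where ys: "ys \<in> set_pmf (Pi_pmf {..<k} x (\<lambda>_. mut x))" and "i < k" "y = ys i"
    using argmax_indices_nonempty[OF assms, of "\<lambda>i. f (ys i)" for ys]
    by (auto simp: best_offspring_def Let_def)
  then show "y \<in> set_pmf (mut x)"
    by (auto simp: set_Pi_pmf PiE_dflt_def)
qed

lemma prob_best_offspring_improves_le:
  assumes k: "1 \<le> k"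
  shows "measure_pmf.prob (best_offspring f mut k x) {y. f y > f x} \<le> real k * p_plus f mut x"
proof -
  let ?P = "Pi_pmf {..<k} x (\<lambda>_. mut x)"
  let ?I = "{y. f y > f x}"
  let ?winner = "\<lambda>ys. map_pmf ys (pmf_of_set {i. i < k \<and> f (ys i) = Max ((\<lambda>i. f (ys i)) ` {..<k})})"
  let ?some_improves = "\<Union>i<k. {ys. f (ys i) > f x}"
  have winner: "emeasure (?winner ys) ?I \<le> indicator ?some_improves ys" for ys
  proof (cases "ys \<in> ?some_improves")
    case False
    then show ?thesis
      using argmax_indices_nonempty[OF k, of "\<lambda>i. f (ys i)"]
      by (subst null_setsD1[OF in_null_sets_measure_pmfI]) auto
  qed (simp add: measure_pmf.emeasure_le_1)
  have "emeasure (best_offspring f mut k x) ?I = (\<integral>\<^sup>+ys. emeasure (?winner ys) ?I \<partial>?P)"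
    by (simp add: best_offspring_def Let_def)
  also have "\<dots> \<le> (\<integral>\<^sup>+ys. indicator ?some_improves ys \<partial>?P)"
    by (rule nn_integral_mono) (rule winner)
  also have "\<dots> = emeasure ?P ?some_improves"
    by simp
  also have "\<dots> \<le> (\<Sum>i<k. emeasure ?P {ys. f (ys i) > f x})"
    by (rule emeasure_subadditive_finite) auto
  also have "\<dots> = (\<Sum>i<k. emeasure (map_pmf (\<lambda>ys. ys i) ?P) ?I)"
    by simp
  also have "\<dots> = of_nat k * emeasure (mut x) ?I"
    by (simp add: Pi_pmf_component)
  finally show ?thesis
    by (simp add: measure_pmf.emeasure_eq_measure p_plus_def ennreal_of_nat_eq_real_of_nat
        ennreal_mult[symmetric])
qed

lemma nn_integral_pmf_le_affine_indicator:
  fixes p :: "'a pmf" and g :: "'a \<Rightarrow> real"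
  assumes g: "\<And>y. g y \<le> A * indicator S y + B" and A: "0 \<le> A" and B: "0 \<le> B"
  shows "(\<integral>\<^sup>+y. ennreal (g y) \<partial>p) \<le> ennreal (A * measure_pmf.prob p S + B)"
proof -
  have "(\<integral>\<^sup>+y. ennreal (g y) \<partial>p) \<le> (\<integral>\<^sup>+y. ennreal A * indicator S y + ennreal B \<partial>p)"
  proof (intro nn_integral_mono)
    fix y
    have "ennreal (g y) \<le> ennreal (A * indicator S y + B)"
      using g by (rule ennreal_leI)
    then show "ennreal (g y) \<le> ennreal A * indicator S y + ennreal B"
      using A B by (cases "y \<in> S") simp_all
  qed
  also have "\<dots> = ennreal A * emeasure p S + ennreal B"
    by (simp add: nn_integral_add nn_integral_cmult_indicator measure_pmf.emeasure_space_1)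
  also have "\<dots> = ennreal (A * measure_pmf.prob p S + B)"
    using A B by (simp add: measure_pmf.emeasure_eq_measure ennreal_mult)
  finally show ?thesis .
qed

lemma nat_round_bounds:
  assumes "1 \<le> lam"
  shows "1 \<le> nat (round lam)" "real (nat (round lam)) \<le> 2 * lam"
proof -
  have "1 \<le> round lam"
    using assms by (metis of_int_1 round_mono round_of_int)
  moreover have "real_of_int (round lam) \<le> lam + 1/2"
    by (rule of_int_round_le)
  ultimately show "1 \<le> nat (round lam)" "real (nat (round lam)) \<le> 2 * lam"
    using assms by linarith+
qed

definition potential :: "real \<Rightarrow> real \<Rightarrow> real \<Rightarrow> real \<Rightarrow> real" where
  "potential a b \<kappa> lam = (a / min lam b) powr \<kappa>"

lemma potential_le_of_div_le:
  assumes F: "1 < F" and lam: "0 < lam" and b: "0 < b" and a: "0 \<le> a" and \<kappa>: "0 \<le> \<kappa>"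
    and lam': "lam / F \<le> lam'"
  shows "potential a b \<kappa> lam' \<le> (F * a / min lam b) powr \<kappa>"
proof -
  have "min lam b / F \<le> lam / F" "min lam b / F \<le> b / F" "b / F \<le> b"
    using F b by (auto intro: divide_right_mono simp: divide_le_eq)
  then have le: "min lam b / F \<le> min lam' b"
    using lam' by simp
  have pos: "0 < min lam b / F"
    using F lam b by simp
  then have pos': "0 < min lam' b"
    using le by linarith
  have "a / min lam' b \<le> a / (min lam b / F)"
    by (rule divide_left_mono[OF le a mult_pos_pos[OF pos' pos]])
  then show ?thesis
    unfolding potential_def using a \<kappa> pos' by (intro powr_mono2) (auto simp: mult.commute)
qed

lemma potential_le_add: "potential a b \<kappa> lam \<le> (a / lam) powr \<kappa> + (a / b) powr \<kappa>"
  unfolding potential_def by (cases "lam \<le> b") (auto simp: min_def)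

lemma nn_integral_ea_step_potential_le:
  assumes F: "1 < F" and b: "0 < b" and a: "0 \<le> a" and \<kappa>: "0 \<le> \<kappa>"
    and lam: "1 \<le> lam"
  shows "(\<integral>\<^sup>+st. ennreal (potential a b \<kappa> (snd st)) \<partial>ea_step F s f mut (x, lam))
    \<le> ennreal ((F * a / min lam b) powr \<kappa>
         * measure_pmf.prob (best_offspring f mut (nat (round lam)) x) {y. f y > f x}
       + potential a b \<kappa> (F powr (1 / s) * lam))"
proof -
  define lam' where "lam' y = (if f y > f x then max 1 (lam / F) else F powr (1 / s) * lam)" for y
  have "potential a b \<kappa> (lam' y)
      \<le> (F * a / min lam b) powr \<kappa> * indicator {y. f y > f x} y + potential a b \<kappa> (F powr (1 / s) * lam)"
    for y
  proof (cases "f y > f x")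
    case True
    then have "potential a b \<kappa> (lam' y) \<le> (F * a / min lam b) powr \<kappa>"
      using F lam b a \<kappa> by (intro potential_le_of_div_le) (auto simp: lam'_def)
    moreover have "0 \<le> potential a b \<kappa> (F powr (1 / s) * lam)"
      by (simp add: potential_def)
    ultimately show ?thesis
      using True by simp
  qed (simp add: lam'_def)
  then have "(\<integral>\<^sup>+y. ennreal (potential a b \<kappa> (lam' y)) \<partial>best_offspring f mut (nat (round lam)) x)
      \<le> ennreal ((F * a / min lam b) powr \<kappa>
           * measure_pmf.prob (best_offspring f mut (nat (round lam)) x) {y. f y > f x}
         + potential a b \<kappa> (F powr (1 / s) * lam))"
    by (rule nn_integral_pmf_le_affine_indicator) (simp_all add: potential_def)
  then show ?thesis
    by (simp add: ea_step_def lam'_def)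
qed

lemma ea_step_potential_drift:
  assumes F: "1 < F" and s: "0 < s" and a: "0 < a" and ab: "a \<le> b" and \<kappa>: "0 \<le> \<kappa>"
    and lam: "1 \<le> lam" and succ: "p_plus f mut x \<le> q"
    and key: "2 * b * q * F powr \<kappa> + F powr (-\<kappa>/s) \<le> 1"
  shows "(\<integral>\<^sup>+st. ennreal (potential a b \<kappa> (snd st)) \<partial>ea_step F s f mut (x, lam))
    \<le> ennreal (potential a b \<kappa> lam + (F * a / b) powr \<kappa>)"
proof -
  let ?P = "measure_pmf.prob (best_offspring f mut (nat (round lam)) x) {y. f y > f x}"
  let ?fail = "potential a b \<kappa> (F powr (1 / s) * lam)"
  have "0 \<le> q"
    using succ by (simp add: p_plus_def) (meson measure_nonneg order_trans)
  have "?P \<le> real (nat (round lam)) * q"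
    using prob_best_offspring_improves_le[OF nat_round_bounds(1)[OF lam]] succ
    by (meson mult_left_mono of_nat_0_le_iff order_trans)
  also have "\<dots> \<le> 2 * lam * q"
    using nat_round_bounds(2)[OF lam] \<open>0 \<le> q\<close> by (rule mult_right_mono)
  finally have P: "?P \<le> 2 * lam * q" "?P \<le> 1"
    by simp_all
  have "(F * a / min lam b) powr \<kappa> * ?P + ?fail \<le> potential a b \<kappa> lam + (F * a / b) powr \<kappa>"
  proof (cases "lam \<le> b")
    case True
    have "(a / (F powr (1/s) * lam)) powr \<kappa> = (a / lam * F powr (-1/s)) powr \<kappa>"
      using F by (simp add: powr_minus_divide mult.commute)
    also have "\<dots> = (a / lam) powr \<kappa> * F powr (-\<kappa>/s)"
      using a lam by (subst powr_mult) (auto simp: powr_powr)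
    finally have "?fail \<le> (a / lam) powr \<kappa> * F powr (-\<kappa>/s) + (a / b) powr \<kappa>"
      using potential_le_add[of a b \<kappa> "F powr (1/s) * lam"] by simp
    moreover have "(F * a / lam) powr \<kappa> * ?P \<le> (a / lam) powr \<kappa> * (2 * b * q * F powr \<kappa>)"
    proof -
      have A: "(F * a / lam) powr \<kappa> = (a / lam) powr \<kappa> * F powr \<kappa>"
        using F a lam by (subst powr_mult[symmetric]) (auto simp: ac_simps)
      have "?P \<le> 2 * b * q"
        using P(1) True \<open>0 \<le> q\<close> by (smt (verit) mult_right_mono)
      then have "(a / lam) powr \<kappa> * F powr \<kappa> * ?P \<le> (a / lam) powr \<kappa> * F powr \<kappa> * (2 * b * q)"
        by (rule mult_left_mono) simp
      then show ?thesis
        unfolding A by (simp only: ac_simps)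
    qed
    moreover have "(a / lam) powr \<kappa> * (2 * b * q * F powr \<kappa> + F powr (-\<kappa>/s)) \<le> (a / lam) powr \<kappa>"
      using key by (simp add: mult_left_le)
    moreover have "(a / b) powr \<kappa> \<le> (F * a / b) powr \<kappa>"
      using F a ab \<kappa> by (intro powr_mono2) (auto simp: divide_right_mono)
    ultimately show ?thesis
      using True by (simp add: potential_def algebra_simps)
  next
    case False
    have "lam \<le> F powr (1 / s) * lam"
      using F s lam by (auto simp: ge_one_powr_ge_zero)
    then have "?fail = potential a b \<kappa> lam"
      using False by (simp add: potential_def min_def)
    moreover have "(F * a / b) powr \<kappa> * ?P \<le> (F * a / b) powr \<kappa>"
      using P(2) by (simp add: mult_left_le)
    ultimately show ?thesis
      using False by (simp add: min_def)
  qed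
  then show ?thesis
    using a ab by (intro order_trans[OF nn_integral_ea_step_potential_le[OF F _ _ \<kappa> lam] ennreal_leI])
      simp_all
qed

lemma emeasure_traj_hits_le:
  fixes step :: "'a \<Rightarrow> 'a pmf" and \<Phi> :: "'a \<Rightarrow> real"
  assumes inv: "\<And>st st'. Inv st \<Longrightarrow> \<not> bad st \<Longrightarrow> st' \<in> set_pmf (step st) \<Longrightarrow> Inv st'"
    and bad: "\<And>st. Inv st \<Longrightarrow> bad st \<Longrightarrow> 1 \<le> \<Phi> st"
    and nonneg: "\<And>st. Inv st \<Longrightarrow> 0 \<le> \<Phi> st" and \<delta>: "0 \<le> \<delta>"
    and drift: "\<And>st. Inv st \<Longrightarrow> \<not> bad st \<Longrightarrow>
      (\<integral>\<^sup>+st'. ennreal (\<Phi> st') \<partial>step st) \<le> ennreal (\<Phi> st + \<delta>)"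
    and st: "Inv st"
  shows "emeasure (traj step t st) {ss. \<exists>x\<in>set ss. bad x} \<le> ennreal (\<Phi> st + real t * \<delta>)"
proof -
  let ?B = "{ss. \<exists>x\<in>set ss. bad x}"
  have start_bad: "emeasure (traj step t st) ?B \<le> ennreal (\<Phi> st + real t * \<delta>)"
    if "Inv st" "bad st" for t st
  proof -
    have "emeasure (traj step t st) ?B \<le> ennreal 1"
      by (simp add: measure_pmf.emeasure_le_1)
    also have "\<dots> \<le> ennreal (\<Phi> st + real t * \<delta>)"
      using bad[OF that] \<delta> by (intro ennreal_leI add_increasing2) simp_all
    finally show ?thesis .
  qed
  show ?thesis
    using st
  proof (induction t arbitrary: st)
    case 0
    then show ?case
      using start_bad[of st 0] by (cases "bad st") simp_all
  next
    case (Suc t)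
    show ?case
    proof (cases "bad st")
      case False
      then have "emeasure (traj step (Suc t) st) ?B = (\<integral>\<^sup>+st'. emeasure (traj step t st') ?B \<partial>step st)"
        by simp
      also have "\<dots> \<le> (\<integral>\<^sup>+st'. ennreal (\<Phi> st') + ennreal (real t * \<delta>) \<partial>step st)"
      proof (intro nn_integral_mono_AE AE_pmfI)
        fix st' assume "st' \<in> set_pmf (step st)"
        then have "Inv st'"
          using inv Suc.prems False by blast
        then show "emeasure (traj step t st') ?B \<le> ennreal (\<Phi> st') + ennreal (real t * \<delta>)"
          using Suc.IH nonneg \<delta> by simp
      qed
      also have "\<dots> = (\<integral>\<^sup>+st'. ennreal (\<Phi> st') \<partial>step st) + ennreal (real t * \<delta>)"
        by (simp add: nn_integral_add measure_pmf.emeasure_space_1)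
      also have "\<dots> \<le> ennreal (\<Phi> st + \<delta>) + ennreal (real t * \<delta>)"
        using drift[OF Suc.prems False] by (rule add_right_mono)
      also have "\<dots> = ennreal (\<Phi> st + real (Suc t) * \<delta>)"
        using nonneg[OF Suc.prems] \<delta> by (simp del: ennreal_plus add: ennreal_plus[symmetric] algebra_simps)
      finally show ?thesis .
    qed (use start_bad Suc.prems in blast)
  qed
qed

lemma prob_ea_lambda_drops_below_le:
  assumes F: "1 < F" and s: "0 < s" and a: "0 < a" and ab: "a \<le> b" and \<kappa>: "0 \<le> \<kappa>"
    and closed: "\<And>x. x \<in> X \<Longrightarrow> set_pmf (mut x) \<subseteq> X"
    and succ: "\<And>x. x \<in> X \<Longrightarrow> p_plus f mut x \<le> q"
    and key: "2 * b * q * F powr \<kappa> + F powr (-\<kappa>/s) \<le> 1"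
    and x0: "x0 \<in> X" and lam0: "b \<le> lam0" "1 \<le> lam0"
  shows "measure_pmf.prob (traj (ea_step F s f mut) T (x0, lam0)) {ss. \<exists>st\<in>set ss. snd st < a}
    \<le> (real T + 1) * (F * a / b) powr \<kappa>"
proof -
  let ?Inv = "\<lambda>st. fst st \<in> X \<and> 1 \<le> snd st"
  let ?\<Phi> = "\<lambda>st. potential a b \<kappa> (snd st)"
  have "emeasure (traj (ea_step F s f mut) T (x0, lam0)) {ss. \<exists>st\<in>set ss. snd st < a}
      \<le> ennreal (?\<Phi> (x0, lam0) + real T * (F * a / b) powr \<kappa>)" (is "_ \<le> ennreal ?bound")
  proof (rule emeasure_traj_hits_le[where Inv = ?Inv])
    fix st st' assume inv: "?Inv st" and st': "st' \<in> set_pmf (ea_step F s f mut st)"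
    obtain x lam where st: "st = (x, lam)"
      by fastforce
    have "1 * 1 \<le> F powr (1 / s) * lam"
      using F s inv st by (intro mult_mono) (auto simp: ge_one_powr_ge_zero)
    moreover have "set_pmf (best_offspring f mut (nat (round lam)) x) \<subseteq> X"
      using order_trans[OF set_pmf_best_offspring_subset[OF nat_round_bounds(1)] closed] inv st
      by simp
    ultimately show "?Inv st'"
      using st' st by (auto simp: ea_step_def)
  next
    fix st :: ea_state assume "?Inv st" "snd st < a"
    then have "1 \<le> a / min (snd st) b"
      using ab by (simp add: min_def)
    then show "1 \<le> ?\<Phi> st"
      unfolding potential_def using \<kappa> by (simp add: ge_one_powr_ge_zero)
  next
    fix st :: ea_state assume "?Inv st" "\<not> snd st < a"
    then show "(\<integral>\<^sup>+st'. ennreal (?\<Phi> st') \<partial>ea_step F s f mut st)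
        \<le> ennreal (?\<Phi> st + (F * a / b) powr \<kappa>)"
      using ea_step_potential_drift[OF F s a ab \<kappa> _ succ key] by (cases st) simp
  next
    show "?Inv (x0, lam0)"
      using x0 lam0 by simp
  qed (simp_all add: potential_def)
  then have "measure_pmf.prob (traj (ea_step F s f mut) T (x0, lam0)) {ss. \<exists>st\<in>set ss. snd st < a}
      \<le> ?bound"
    by (simp add: measure_pmf.emeasure_eq_measure potential_def del: ennreal_plus)
  moreover have "?\<Phi> (x0, lam0) \<le> (F * a / b) powr \<kappa>"
  proof -
    have "a / b \<le> F * a / b"
      using F a ab by (simp add: divide_right_mono)
    then show ?thesis
      using lam0 a ab \<kappa> by (simp add: potential_def min_def powr_mono2)
  qed
  ultimately show ?thesis
    by (simp add: algebra_simps)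
qed

lemma powr_mult_log: "1 < b \<Longrightarrow> 0 < x \<Longrightarrow> b powr (e * log b x) = x powr e"
  by (simp add: powr_powr[symmetric] mult.commute[of e])

lemma prob_ea_lambda_drops_below_le_powr:
  fixes n T :: nat
  assumes F: "1 < F" and s: "0 < s" and \<epsilon>: "0 < \<epsilon>" and n: "1 \<le> n"
    and closed: "\<And>x. x \<in> X \<Longrightarrow> set_pmf (mut x) \<subseteq> X"
    and succ: "\<And>x. x \<in> X \<Longrightarrow> p_plus f mut x \<le> C * real n powr -\<epsilon>"
    and small: "2 * C * real n powr (-\<epsilon>/4) \<le> 1/2" "real n powr (-\<epsilon>/(4 * s)) \<le> 1/2"
    and a: "0 < a" "F * a \<le> real n powr (\<epsilon>/4)"
    and T: "real T + 1 \<le> real n powr (\<epsilon>\<^sup>2 / (32 * ln F) * ln (real n))"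
    and x0: "x0 \<in> X" and lam0: "lambda2 \<epsilon> n \<le> lam0"
  shows "measure_pmf.prob (traj (ea_step F s f mut) T (x0, lam0)) {ss. \<exists>st\<in>set ss. snd st < a}
    \<le> real n powr (- (\<epsilon>\<^sup>2 / (32 * ln F)) * ln (real n))"
proof -
  define b where "b = real n powr (\<epsilon>/2)"
  define \<kappa> where "\<kappa> = \<epsilon>/4 * log F n"
  have n_pos: "0 < real n"
    using n by simp
  have b: "1 \<le> b"
    using n \<epsilon> by (simp add: b_def ge_one_powr_ge_zero)
  have \<kappa>: "0 \<le> \<kappa>"
    using F \<epsilon> n by (simp add: \<kappa>_def)
  have F_\<kappa>: "F powr \<kappa> = real n powr (\<epsilon>/4)"
    unfolding \<kappa>_def using F n_pos by (rule powr_mult_log)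
  have "F * a / b \<le> real n powr (\<epsilon>/4) / real n powr (\<epsilon>/2)"
    using a(2) by (simp add: b_def divide_right_mono)
  also have "\<dots> = real n powr (-\<epsilon>/4)"
    using n_pos by (simp add: powr_diff[symmetric])
  finally have Fab: "F * a / b \<le> real n powr (-\<epsilon>/4)" .
  have ab: "a \<le> b"
  proof -
    have "1 * a \<le> F * a"
      using F a(1) by (intro mult_right_mono) simp_all
    also have "\<dots> \<le> real n powr (\<epsilon>/4)"
      by (fact a(2))
    also have "\<dots> \<le> real n powr (\<epsilon>/2)"
      using n \<epsilon> by (intro powr_mono) simp_all
    finally show ?thesis
      by (simp add: b_def)
  qed
  have powers: "b * real n powr -\<epsilon> * F powr \<kappa> = real n powr (-\<epsilon>/4)"
    by (simp add: b_def F_\<kappa> powr_add[symmetric])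
  have success_term: "2 * b * (C * real n powr -\<epsilon>) * F powr \<kappa> = 2 * C * real n powr (-\<epsilon>/4)"
    by (simp only: powers[symmetric] ac_simps)
  have failure_term: "F powr (-\<kappa>/s) = real n powr (-\<epsilon>/(4 * s))"
    using F n_pos powr_mult_log[of F "real n" "-\<epsilon>/(4 * s)"] by (simp add: \<kappa>_def)
  have key: "2 * b * (C * real n powr -\<epsilon>) * F powr \<kappa> + F powr (-\<kappa>/s) \<le> 1"
    unfolding success_term failure_term using small by linarith
  have "measure_pmf.prob (traj (ea_step F s f mut) T (x0, lam0)) {ss. \<exists>st\<in>set ss. snd st < a}
      \<le> (real T + 1) * (F * a / b) powr \<kappa>"
    using lam0 b
    by (intro prob_ea_lambda_drops_below_le[OF F s a(1) ab \<kappa> closed succ key x0])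
       (simp_all add: b_def lambda2_def)
  also have "\<dots> \<le> real n powr (\<epsilon>\<^sup>2 / (32 * ln F) * ln (real n)) * (real n powr (-\<epsilon>/4)) powr \<kappa>"
    using T Fab F a(1) ab \<kappa> by (intro mult_mono powr_mono2) simp_all
  also have "(real n powr (-\<epsilon>/4)) powr \<kappa> = real n powr (-2 * (\<epsilon>\<^sup>2 / (32 * ln F)) * ln (real n))"
    by (simp add: powr_powr \<kappa>_def log_def power2_eq_square mult.assoc)
  also have "real n powr (\<epsilon>\<^sup>2 / (32 * ln F) * ln (real n)) * \<dots>
      = real n powr (- (\<epsilon>\<^sup>2 / (32 * ln F)) * ln (real n))"
    by (simp add: powr_add[symmetric] mult.commute)
  finally show ?thesis .
qed

lemma lambda1_le:
  assumes \<gamma>: "1 < \<gamma>" and s: "0 < s"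
    and dn: "ln (real dn + 1) \<le> L" and n: "ln (real n * ln (real n)) \<le> L"
  shows "lambda1 \<gamma> s dn n \<le> 4 * ((ln (2 * (s + 1)) + L) / ln \<gamma>)"
proof -
  have L: "0 \<le> L" and s_term: "0 < ln (2 * (s + 1))"
    using dn s by (auto intro: order_trans[rotated])
  have "ln (2 * real dn * (s + 1)) \<le> ln (2 * (s + 1)) + L"
  proof (cases "dn = 0")
    case False
    then have "ln (2 * real dn * (s + 1)) = ln (2 * (s + 1)) + ln (real dn)"
      using s ln_mult_pos[of "2 * (s + 1)" "real dn"] by (simp add: ac_simps)
    also have "ln (real dn) \<le> ln (real dn + 1)"
      using False by simp
    finally show ?thesis
      using dn by linarith
  qed (use L s_term in simp)
  moreover have "ln (real n * ln (real n)) \<le> ln (2 * (s + 1)) + L"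
    using n s_term by linarith
  ultimately have "max (log \<gamma> (2 * real dn * (s + 1))) (log \<gamma> (real n * ln (real n)))
      \<le> (ln (2 * (s + 1)) + L) / ln \<gamma>"
    using \<gamma> by (simp add: log_def divide_right_mono)
  then show ?thesis
    unfolding lambda1_def by linarith
qed

lemma eventually_lambda1_pos_le_powr:
  assumes \<gamma>: "1 < \<gamma>" and s: "0 < s" and K: "0 \<le> K" and e: "0 < e"
    and d: "(\<lambda>n. ln (real (d n) + 1)) \<in> o(\<lambda>n. (ln (real n))\<^sup>2)"
  shows "eventually (\<lambda>n. 0 < lambda1 \<gamma> s (d n) n \<and> K * lambda1 \<gamma> s (d n) n \<le> real n powr e) at_top"
proof -
  define A M where "A = ln (2 * (s + 1))" and "M = 4 * K / ln \<gamma>"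
  have "eventually (\<lambda>n. ln (real (d n) + 1) \<le> (ln (real n))\<^sup>2) at_top"
    using landau_o.smallD[OF d zero_less_one] by (auto elim: eventually_mono)
  moreover have "eventually (\<lambda>n. ln (real n * ln (real n)) \<le> (ln (real n))\<^sup>2) at_top"
    by real_asymp
  moreover have "eventually (\<lambda>n. (A + (ln (real n))\<^sup>2) * M \<le> real n powr e) at_top"
    using e by real_asymp
  moreover have "eventually (\<lambda>n. 1 < real n * ln (real n)) at_top"
    by real_asymp
  ultimately show ?thesis
  proof eventually_elim
    case (elim n)
    have "K * lambda1 \<gamma> s (d n) n \<le> K * (4 * ((ln (2 * (s + 1)) + (ln (real n))\<^sup>2) / ln \<gamma>))"
      by (rule mult_left_mono[OF lambda1_le[OF \<gamma> s elim(1,2)] K])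
    also have "\<dots> = (A + (ln (real n))\<^sup>2) * M"
      by (simp add: A_def M_def)
    finally show ?case
      using elim(3,4) \<gamma> by (simp add: lambda1_def less_max_iff_disj)
  qed
qed

lemma eventually_plus_one_le_powr_ln:
  fixes T :: "nat \<Rightarrow> nat"
  assumes T: "(\<lambda>n. ln (real (T n))) \<in> o(\<lambda>n. (ln (real n))\<^sup>2)" and c: "0 < c"
  shows "eventually (\<lambda>n. real (T n) + 1 \<le> real n powr (c * ln (real n))) at_top"
proof -
  have "eventually (\<lambda>n. ln (real (T n)) \<le> c/2 * (ln (real n))\<^sup>2) at_top"
    using landau_o.smallD[OF T, of "c/2"] c by (auto elim: eventually_mono)
  moreover have "eventually (\<lambda>n. ln 2 \<le> c/2 * (ln (real n))\<^sup>2) at_top"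
    using c by real_asymp
  moreover have "eventually (\<lambda>n::nat. 0 < n) at_top"
    by (rule eventually_gt_at_top)
  ultimately show ?thesis
  proof eventually_elim
    case (elim n)
    have "ln (real (T n) + 1) \<le> c * (ln (real n))\<^sup>2"
    proof (cases "T n = 0")
      case False
      then have "ln (real (T n) + 1) \<le> ln (2 * real (T n))"
        by simp
      also have "\<dots> = ln 2 + ln (real (T n))"
        using False by (simp add: ln_mult_pos)
      finally show ?thesis
        using elim(1,2) by linarith
    qed (use c in simp)
    have "real (T n) + 1 = exp (ln (real (T n) + 1))"
      by simp
    also have "\<dots> \<le> exp (c * (ln (real n))\<^sup>2)"
      using \<open>ln (real (T n) + 1) \<le> _\<close> by (simp only: exp_le_cancel_iff)
    also have "\<dots> = real n powr (c * ln (real n))"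
      using elim(3) by (simp add: powr_def power2_eq_square mult.assoc)
    finally show ?case .
  qed
qed

lemma eventually_prob_ea_lambda_drops_below_le:
  fixes X :: "nat \<Rightarrow> bitstr set" and a :: "nat \<Rightarrow> real" and T :: "nat \<Rightarrow> nat"
  assumes F: "1 < F" and s: "0 < s" and \<epsilon>: "0 < \<epsilon>"
    and closed: "\<And>n x. x \<in> X n \<Longrightarrow> set_pmf (mut n x) \<subseteq> X n"
    and succ: "eventually (\<lambda>n. \<forall>x \<in> X n. p_plus (f n) (mut n) x \<le> C * real n powr -\<epsilon>) at_top"
    and a: "eventually (\<lambda>n. 0 < a n \<and> F * a n \<le> real n powr (\<epsilon>/4)) at_top"
    and T: "eventually (\<lambda>n. real (T n) + 1 \<le> real n powr (\<epsilon>\<^sup>2 / (32 * ln F) * ln (real n))) at_top"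
  shows "eventually (\<lambda>n. \<forall>x0 \<in> X n. \<forall>lam0. lambda2 \<epsilon> n \<le> lam0 \<longrightarrow>
      measure_pmf.prob (traj (ea_step F s (f n) (mut n)) (T n) (x0, lam0))
        {ss. \<exists>st \<in> set ss. snd st < a n}
      \<le> real n powr (- (\<epsilon>\<^sup>2 / (32 * ln F)) * ln (real n))) at_top"
proof -
  have "eventually (\<lambda>n. 2 * C * real n powr (-\<epsilon>/4) \<le> 1/2) at_top"
    using \<epsilon> by real_asymp
  moreover have "eventually (\<lambda>n. real n powr (-\<epsilon>/(4 * s)) \<le> 1/2) at_top"
    using \<epsilon> s by real_asymp
  moreover note eventually_ge_at_top[of 1] succ a T
  ultimately show ?thesis
  proof eventually_elim
    case (elim n)
    show ?case
    proof (intro ballI allI impI)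
      fix x0 lam0 assume "x0 \<in> X n" "lambda2 \<epsilon> n \<le> lam0"
      with elim show "measure_pmf.prob (traj (ea_step F s (f n) (mut n)) (T n) (x0, lam0))
          {ss. \<exists>st \<in> set ss. snd st < a n} \<le> real n powr (- (\<epsilon>\<^sup>2 / (32 * ln F)) * ln (real n))"
        by (intro prob_ea_lambda_drops_below_le_powr[OF F s \<epsilon> elim(3) closed[where n = n]]) auto
    qed
  qed
qed

theorem lemma3p3:
  fixes F s \<epsilon> \<gamma> :: real
    and f :: "nat \<Rightarrow> bitstr \<Rightarrow> nat" and d :: "nat \<Rightarrow> nat"
    and mut :: "nat \<Rightarrow> bitstr \<Rightarrow> bitstr pmf" and T :: "nat \<Rightarrow> nat"
  assumes F: "F > 1" and s: "s > 0"
    and mut_op: "(\<exists>p :: nat \<Rightarrow> real. (\<forall>n. 0 \<le> p n \<and> p n \<le> 1)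
                    \<and> p \<in> O(\<lambda>n. 1 / real n)
                    \<and> (\<exists>c. eventually (\<lambda>n. p n \<ge> real n powr (-c)) at_top)
                    \<and> mut = (\<lambda>n. sbm n (p n)))
               \<or> (\<exists>\<beta> > 1. mut = (\<lambda>n. heavy_tailed n \<beta>))"
    and f_range: "\<And>n x. x \<in> space n \<Longrightarrow> f n x \<le> d n"
    and f_opt: "\<And>n. \<exists>x \<in> space n. f n x = d n"
    and hard: "everywhere_hard f d mut \<epsilon>"
    and d_vals: "(\<lambda>n. ln (real (d n) + 1)) \<in> o(\<lambda>n. (ln (real n))\<^sup>2)"
    and \<gamma>: "\<gamma> > 1"
    and p_minus_bound: "eventually (\<lambda>n. \<forall>x \<in> space n. f n x < d n \<longrightarrow>
                          p_minus (f n) (mut n) x \<le> 1 / \<gamma>) at_top"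
    and T: "(\<lambda>n. ln (real (T n))) \<in> o(\<lambda>n. (ln (real n))\<^sup>2)"
  shows "\<exists>c > 0. eventually (\<lambda>n. \<forall>x0 \<in> space n. \<forall>lam0. lam0 \<ge> lambda2 \<epsilon> n \<longrightarrow>
           measure_pmf.prob (traj (ea_step F s (f n) (mut n)) (T n) (x0, lam0))
             {ss. \<exists>st \<in> set ss. snd st < lambda1 \<gamma> s (d n) n}
           \<le> real n powr (- c * ln (real n))) at_top"
proof -
  from hard have \<epsilon>: "0 < \<epsilon>" and "p_max f d mut \<in> O(\<lambda>n. real n powr -\<epsilon>)"
    unfolding everywhere_hard_def by auto
  then obtain C where "eventually (\<lambda>n. norm (p_max f d mut n) \<le> C * norm (real n powr -\<epsilon>)) at_top"
    by (elim landau_o.bigE) blast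
  then have C: "eventually (\<lambda>n. p_max f d mut n \<le> C * real n powr -\<epsilon>) at_top"
    by (rule eventually_mono) simp
  have closed: "set_pmf (mut n x) \<subseteq> space n" if "x \<in> space n" for n x
    using mut_op set_pmf_sbm_subset_space[OF that] set_pmf_heavy_tailed_subset_space[OF that]
    by auto
  have succ: "eventually (\<lambda>n. \<forall>x \<in> space n. p_plus (f n) (mut n) x \<le> C * real n powr -\<epsilon>) at_top"
    using C by eventually_elim (use p_plus_le_p_max closed f_range in \<open>blast intro: order_trans\<close>)
  have lambda1: "eventually (\<lambda>n. 0 < lambda1 \<gamma> s (d n) n
      \<and> F * lambda1 \<gamma> s (d n) n \<le> real n powr (\<epsilon>/4)) at_top"
    using F \<epsilon> by (intro eventually_lambda1_pos_le_powr[OF \<gamma> s _ _ d_vals]) simp_all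
  define c where "c = \<epsilon>\<^sup>2 / (32 * ln F)"
  have c: "0 < c"
    using \<epsilon> F by (simp add: c_def)
  show ?thesis
    using eventually_prob_ea_lambda_drops_below_le[OF F s \<epsilon> closed succ lambda1
        eventually_plus_one_le_powr_ln[OF T c, unfolded c_def]] c
    unfolding c_def by auto
qed

end
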